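(* Let $\mathcal{A}$ be a computably enumerable set of axioms (coded as natural numbers). Define $C\subseteq\omega$ by $$y\in C \iff \exists l\in\omega\ \exists \sigma\subseteq C\ \bigl[(l,\sigma,y)\in\mathcal{A}\bigr],$$ where $\sigma\subseteq C$ means that $\sigma$ agrees with the characteristic function of $C$ on $\mathrm{dom}\,\sigma$. Then $C$ is well defined and is $\mathrm{REA}[\omega]$.
   Context: Let $\langle x,y\rangle$ denote a standard computable pairing function; $\omega^{[<l]}=\{\langle m,y\rangle: m<l\}$ and $\omega^{[\ge l]}=\{\langle m,y\rangle: m\ge l\}$. An axiom is a triple $(l,\sigma,y)$ where $l\in\omega$, $\sigma$ is a function from a finite subset of $\omega^{[<l]}$ to $\{0,1\}$, and $y\in\omega^{[\ge l]}$. For $X\subseteq\omega$, $X^{[n]}=\{y:\langle n,y\rangle\in X\}$ and $X^{[<n]}=\{\langle m,y\rangle\in X:m<n\}$. $W_e^Z$ is the $e$-th set c.e. relative to $Z$. A set $C$ is $\mathrm{REA}[\omega]$ iff there is a computable function $f$ such that for every $n$, $C^{[n]}=W^{C^{[<n]}}_{f(n)}$. *)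

theory Defs
  imports Main "HOL-Library.Nat_Bijection"
begin

definition pair :: "nat \<Rightarrow> nat \<Rightarrow> nat" where
  "pair x y = prod_encode (x, y)"

text \<open>Unary partial recursive functions (multiple arguments coded by the pairing
  function), with an oracle query instruction returning the characteristic
  function of the oracle set.\<close>
datatype recf =
    Zero
  | Succ
  | Ident
  | Fst
  | Snd
  | Oracle
  | Comp recf recf
  | Pairf recf recf
  | Prim recf recf
  | Mu recf

inductive eval :: "nat set \<Rightarrow> recf \<Rightarrow> nat \<Rightarrow> nat \<Rightarrow> bool" for Z :: "nat set" where
  eval_Zero: "eval Z Zero x 0"
| eval_Succ: "eval Z Succ x (Suc x)"
| eval_Ident: "eval Z Ident x x"
| eval_Fst: "eval Z Fst x (fst (prod_decode x))"
| eval_Snd: "eval Z Snd x (snd (prod_decode x))"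
| eval_Oracle: "eval Z Oracle x (if x \<in> Z then 1 else 0)"
| eval_Comp: "eval Z g x w \<Longrightarrow> eval Z f w v \<Longrightarrow> eval Z (Comp f g) x v"
| eval_Pairf: "eval Z f x v \<Longrightarrow> eval Z g x w \<Longrightarrow> eval Z (Pairf f g) x (pair v w)"
| eval_Prim0: "eval Z f x v \<Longrightarrow> eval Z (Prim f g) (pair x 0) v"
| eval_PrimS: "eval Z (Prim f g) (pair x n) w \<Longrightarrow> eval Z g (pair x (pair n w)) v
                 \<Longrightarrow> eval Z (Prim f g) (pair x (Suc n)) v"
| eval_Mu: "eval Z f (pair x n) 0 \<Longrightarrow> (\<forall>m<n. \<exists>v. v > 0 \<and> eval Z f (pair x m) v)
                 \<Longrightarrow> eval Z (Mu f) x n"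

primrec code :: "recf \<Rightarrow> nat" where
  "code Zero = pair 0 0"
| "code Succ = pair 1 0"
| "code Ident = pair 2 0"
| "code Fst = pair 3 0"
| "code Snd = pair 4 0"
| "code Oracle = pair 5 0"
| "code (Comp f g) = pair 6 (pair (code f) (code g))"
| "code (Pairf f g) = pair 7 (pair (code f) (code g))"
| "code (Prim f g) = pair 8 (pair (code f) (code g))"
| "code (Mu f) = pair 9 (code f)"

text \<open>\<open>W e Z\<close>: the e-th set c.e. relative to Z (domain of the e-th Z-partial
  recursive function; non-codes index the empty set).\<close>
definition W :: "nat \<Rightarrow> nat set \<Rightarrow> nat set" where
  "W e Z = {y. \<exists>p v. code p = e \<and> eval Z p y v}"

definition computable :: "(nat \<Rightarrow> nat) \<Rightarrow> bool" where
  "computable f \<longleftrightarrow> (\<exists>p. \<forall>n. eval {} p n (f n))"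

definition ce :: "nat set \<Rightarrow> bool" where
  "ce A \<longleftrightarrow> (\<exists>e. A = W e {})"

definition column :: "nat set \<Rightarrow> nat \<Rightarrow> nat set" where
  "column X n = {y. pair n y \<in> X}"

definition below_cols :: "nat set \<Rightarrow> nat \<Rightarrow> nat set" where
  "below_cols X n = {z \<in> X. \<exists>m y. m < n \<and> z = pair m y}"

definition REA_omega :: "nat set \<Rightarrow> bool" where
  "REA_omega C \<longleftrightarrow> (\<exists>f. computable f \<and> (\<forall>n. column C n = W (f n) (below_cols C n)))"

text \<open>An axiom (l, \<sigma>, y): \<sigma> a finite partial function from \<omega>^[<l] to {0,1}
  (1 = True), y \<in> \<omega>^[\<ge>l].\<close>
definition is_axiom :: "nat \<times> (nat \<rightharpoonup> bool) \<times> nat \<Rightarrow> bool" where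
  "is_axiom a = (case a of (l, \<sigma>, y) \<Rightarrow>
     finite (dom \<sigma>) \<and> (\<forall>x\<in>dom \<sigma>. \<exists>m z. m < l \<and> x = pair m z)
     \<and> (\<exists>m z. m \<ge> l \<and> y = pair m z))"

definition code_fin :: "(nat \<rightharpoonup> bool) \<Rightarrow> nat" where
  "code_fin \<sigma> = set_encode {pair x (if b then 1 else 0) | x b. \<sigma> x = Some b}"

definition code_axiom :: "nat \<times> (nat \<rightharpoonup> bool) \<times> nat \<Rightarrow> nat" where
  "code_axiom a = (case a of (l, \<sigma>, y) \<Rightarrow> pair l (pair (code_fin \<sigma>) y))"

definition agrees :: "(nat \<rightharpoonup> bool) \<Rightarrow> nat set \<Rightarrow> bool" where
  "agrees \<sigma> C \<longleftrightarrow> (\<forall>x\<in>dom \<sigma>. \<sigma> x = Some (x \<in> C))"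

definition generated_by :: "(nat \<times> (nat \<rightharpoonup> bool) \<times> nat) set \<Rightarrow> nat set \<Rightarrow> bool" where
  "generated_by A C \<longleftrightarrow> (\<forall>y. y \<in> C \<longleftrightarrow> (\<exists>l \<sigma>. (l, \<sigma>, y) \<in> A \<and> agrees \<sigma> C))"

end

theory Submission
  imports Defs
begin

text \<open>An axiom concluding \<open>y\<close> only consults columns strictly below the column of \<open>y\<close>.
  Hence a generated set is determined column by column: it is unique by induction on the column
  index, and it exists because it can be built in stages, one column at a time.
  Column \<open>n\<close> of the generated set \<open>C\<close> consists of those \<open>z\<close> for which some enumerated axiom
  concludes \<open>\<langle>n, z\<rangle>\<close> under a condition that agrees with \<open>C\<close> below column \<open>n\<close>. This is
  c.e. relative to that part of \<open>C\<close>, uniformly in \<open>n\<close>: a program searches simultaneously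
  over axiom codes and step bounds of a clocked simulation of the enumeration of the axioms, and
  queries the oracle to check the finite condition of the axiom found.\<close>

abbreviation pfst :: "nat \<Rightarrow> nat" where "pfst y \<equiv> fst (prod_decode y)"
abbreviation psnd :: "nat \<Rightarrow> nat" where "psnd y \<equiv> snd (prod_decode y)"

lemma pfst_pair [simp]: "pfst (pair a b) = a"
  by (simp add: pair_def)

lemma psnd_pair [simp]: "psnd (pair a b) = b"
  by (simp add: pair_def)

lemma pair_pfst_psnd: "pair (pfst y) (psnd y) = y"
  by (simp add: pair_def)

lemma pair_eq_iff [simp]: "pair a b = pair c d \<longleftrightarrow> a = c \<and> b = d"
  by (simp add: pair_def)

lemma pair_0_0 [simp]: "pair 0 0 = 0"
  by (simp add: pair_def prod_encode_def)

lemma pfst_0 [simp]: "pfst 0 = 0" and psnd_0 [simp]: "psnd 0 = 0"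
  using pfst_pair[of 0 0] psnd_pair[of 0 0] by simp_all

lemma pair_eq_0_iff [simp]: "pair a b = 0 \<longleftrightarrow> a = 0 \<and> b = 0"
  using pair_eq_iff[of a b 0 0] by simp

section \<open>Programs computing total functions\<close>

definition computes :: "nat set \<Rightarrow> recf \<Rightarrow> (nat \<Rightarrow> nat) \<Rightarrow> bool" where
  "computes Z p F \<longleftrightarrow> (\<forall>y v. eval Z p y v \<longleftrightarrow> v = F y)"

inductive_cases eval_ZeroE: "eval Z Zero y v"
inductive_cases eval_SuccE: "eval Z Succ y v"
inductive_cases eval_IdentE: "eval Z Ident y v"
inductive_cases eval_FstE: "eval Z Fst y v"
inductive_cases eval_SndE: "eval Z Snd y v"
inductive_cases eval_OracleE: "eval Z Oracle y v"
inductive_cases eval_CompE: "eval Z (Comp f g) y v"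
inductive_cases eval_PairfE: "eval Z (Pairf f g) y v"
inductive_cases eval_MuE: "eval Z (Mu f) y v"

lemma computes_cong: "computes Z p F \<Longrightarrow> (\<And>y. F y = G y) \<Longrightarrow> computes Z p G"
  unfolding computes_def by auto

lemma computes_Zero: "computes Z Zero (\<lambda>_. 0)"
  unfolding computes_def by (auto elim: eval_ZeroE intro: eval.intros)

lemma computes_Succ: "computes Z Succ Suc"
  unfolding computes_def by (auto elim: eval_SuccE intro: eval.intros)

lemma computes_Ident: "computes Z Ident (\<lambda>y. y)"
  unfolding computes_def by (auto elim: eval_IdentE intro: eval.intros)

lemma computes_Fst: "computes Z Fst pfst"
  unfolding computes_def by (auto elim: eval_FstE intro: eval.intros)

lemma computes_Snd: "computes Z Snd psnd"
  unfolding computes_def by (auto elim: eval_SndE intro: eval.intros)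

lemma computes_Oracle: "computes Z Oracle (\<lambda>y. of_bool (y \<in> Z))"
  unfolding computes_def
  by (metis eval_Oracle eval_OracleE of_bool_def)

lemma computes_Comp:
  "computes Z f F \<Longrightarrow> computes Z g G \<Longrightarrow> computes Z (Comp f g) (\<lambda>y. F (G y))"
  unfolding computes_def by (auto elim: eval_CompE intro: eval.intros)

lemma computes_Pairf:
  "computes Z f F \<Longrightarrow> computes Z g G \<Longrightarrow> computes Z (Pairf f g) (\<lambda>y. pair (F y) (G y))"
  unfolding computes_def by (auto elim: eval_PairfE intro: eval.intros)

primrec prim_rec :: "(nat \<Rightarrow> nat) \<Rightarrow> (nat \<Rightarrow> nat) \<Rightarrow> nat \<Rightarrow> nat \<Rightarrow> nat" where
  "prim_rec F G x 0 = F x"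
| "prim_rec F G x (Suc n) = G (pair x (pair n (prim_rec F G x n)))"

lemma computes_Prim:
  assumes f: "computes Z f F" and g: "computes Z g G"
  shows "computes Z (Prim f g) (\<lambda>y. prim_rec F G (pfst y) (psnd y))"
proof -
  have complete: "eval Z (Prim f g) (pair x n) (prim_rec F G x n)" for x n
    using f g unfolding computes_def by (induction n) (auto intro: eval.intros)
  have sound: "eval Z q y v \<Longrightarrow> q = Prim f g \<Longrightarrow> v = prim_rec F G (pfst y) (psnd y)" for q y v
    by (induction rule: eval.induct) (use f g in \<open>auto simp: computes_def\<close>)
  show ?thesis
    unfolding computes_def using sound complete by (metis pair_pfst_psnd)
qed

lemma Mu_halts_iff:
  assumes f: "computes Z f F"
  shows "(\<exists>v. eval Z (Mu f) x v) \<longleftrightarrow> (\<exists>n. F (pair x n) = 0)"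
proof
  assume "\<exists>v. eval Z (Mu f) x v"
  then obtain n where "eval Z f (pair x n) 0" by (blast elim: eval_MuE)
  then show "\<exists>n. F (pair x n) = 0"
    using f unfolding computes_def by metis
next
  assume "\<exists>n. F (pair x n) = 0"
  define n where "n = (LEAST n. F (pair x n) = 0)"
  have "F (pair x n) = 0" "\<forall>m<n. F (pair x m) \<noteq> 0"
    unfolding n_def using \<open>\<exists>n. F (pair x n) = 0\<close> by (auto intro: LeastI_ex dest: not_less_Least)
  then have "eval Z (Mu f) x n"
    using f unfolding computes_def by (auto intro!: eval_Mu)
  then show "\<exists>v. eval Z (Mu f) x v" by blast
qed

definition ifz_prog :: "recf \<Rightarrow> recf \<Rightarrow> recf \<Rightarrow> recf" where
  "ifz_prog a z b = Comp (Prim z (Comp b (Pairf Fst (Comp Fst Snd)))) (Pairf Ident a)"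

lemma computes_ifz_prog:
  assumes "computes Z a A" "computes Z z Z0" "computes Z b B"
  shows "computes Z (ifz_prog a z b) (\<lambda>y. case A y of 0 \<Rightarrow> Z0 y | Suc k \<Rightarrow> B (pair y k))"
  unfolding ifz_prog_def
  by (rule computes_cong, (rule computes_Comp computes_Prim computes_Pairf assms
        computes_Fst computes_Snd computes_Ident)+) (simp split: nat.split)

primrec const_prog :: "nat \<Rightarrow> recf" where
  "const_prog 0 = Zero"
| "const_prog (Suc n) = Comp Succ (const_prog n)"

lemma computes_const_prog: "computes Z (const_prog n) (\<lambda>_. n)"
  by (induction n) (auto intro: computes_Zero computes_cong[OF computes_Comp[OF computes_Succ]])

lemmas computes_intros = computes_ifz_prog computes_const_prog computes_Comp computes_Pairf
  computes_Prim computes_Zero computes_Succ computes_Ident computes_Fst computes_Snd computes_Oracle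

section \<open>Clocked evaluation of oracle-free programs\<close>

text \<open>\<open>search h k\<close> scans \<open>h 0, \<dots>, h (k - 1)\<close>, read as clocked results (\<open>0\<close>: no result yet,
  \<open>Suc v\<close>: result \<open>v\<close>), for a first zero: it yields \<open>Suc (Suc m)\<close> if \<open>m\<close> is found, \<open>1\<close> if the
  scan is blocked by a missing result, and \<open>0\<close> if every scanned value is positive.\<close>

primrec search :: "(nat \<Rightarrow> nat) \<Rightarrow> nat \<Rightarrow> nat" where
  "search h 0 = 0"
| "search h (Suc k) = (case search h k of
      0 \<Rightarrow> (case h k of 0 \<Rightarrow> 1 | Suc 0 \<Rightarrow> Suc (Suc k) | Suc (Suc _) \<Rightarrow> 0)
    | Suc r \<Rightarrow> Suc r)"

lemma search_eq_0_iff: "search h k = 0 \<longleftrightarrow> (\<forall>j<k. h j \<ge> 2)"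
  by (induction k) (auto split: nat.split simp: less_Suc_eq)

lemma search_eq_Suc_Suc_iff:
  "search h k = Suc (Suc m) \<longleftrightarrow> m < k \<and> h m = 1 \<and> (\<forall>j<m. h j \<ge> 2)"
proof (induction k)
  case 0
  then show ?case by simp
next
  case (Suc k)
  show ?case
  proof (cases "search h k")
    case 0
    then show ?thesis
      using Suc.IH search_eq_0_iff[of h k] by (auto split: nat.split simp: less_Suc_eq)
  next
    case (Suc r)
    then have "\<not> (h k = 1 \<and> (\<forall>j<k. h j \<ge> 2))"
      using search_eq_0_iff[of h k] by auto
    then show ?thesis
      using Suc Suc.IH by (auto simp: less_Suc_eq)
  qed
qed

text \<open>\<open>run p x s = Suc v\<close> means that \<open>p\<close> halts on \<open>x\<close> with value \<open>v\<close>, within the clock \<open>s\<close>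
  (which bounds the search of \<open>Mu\<close>) and with the empty oracle; \<open>0\<close> means no result yet.\<close>

primrec run :: "recf \<Rightarrow> nat \<Rightarrow> nat \<Rightarrow> nat" where
  "run Zero x s = 1"
| "run Succ x s = Suc (Suc x)"
| "run Ident x s = Suc x"
| "run Fst x s = Suc (pfst x)"
| "run Snd x s = Suc (psnd x)"
| "run Oracle x s = 1"
| "run (Comp f g) x s = (case run g x s of 0 \<Rightarrow> 0 | Suc w \<Rightarrow> run f w s)"
| "run (Pairf f g) x s = (case run f x s of 0 \<Rightarrow> 0 | Suc a \<Rightarrow>
      (case run g x s of 0 \<Rightarrow> 0 | Suc b \<Rightarrow> Suc (pair a b)))"
| "run (Prim f g) x s = prim_rec (\<lambda>y. run f y s)
      (\<lambda>e. case psnd (psnd e) of 0 \<Rightarrow> 0 | Suc w \<Rightarrow> run g (pair (pfst e) (pair (pfst (psnd e)) w)) s)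
      (pfst x) (psnd x)"
| "run (Mu f) x s = (case search (\<lambda>j. run f (pair x j) s) s of Suc (Suc m) \<Rightarrow> Suc m | _ \<Rightarrow> 0)"

lemma run_Prim_0 [simp]: "run (Prim f g) (pair x 0) s = run f x s"
  by simp

lemma run_Prim_Suc [simp]:
  "run (Prim f g) (pair x (Suc n)) s =
     (case run (Prim f g) (pair x n) s of 0 \<Rightarrow> 0 | Suc w \<Rightarrow> run g (pair x (pair n w)) s)"
  by (simp split: nat.split)

declare run.simps(9) [simp del]

lemma run_Mu_eq_Suc_iff:
  "run (Mu f) x s = Suc v \<longleftrightarrow> search (\<lambda>j. run f (pair x j) s) s = Suc (Suc v)"
  by (auto split: nat.split)

declare run.simps(10) [simp del]

lemma run_sound: "run p x s = Suc v \<Longrightarrow> eval {} p x v"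
proof (induction p arbitrary: x s v)
  case (Comp f g)
  then obtain w where "run g x s = Suc w" "run f w s = Suc v"
    by (auto split: nat.splits)
  then show ?case using Comp.IH by (blast intro: eval_Comp)
next
  case (Pairf f g)
  then obtain a b where "run f x s = Suc a" "run g x s = Suc b" "v = pair a b"
    by (auto split: nat.splits)
  then show ?case using Pairf.IH by (blast intro: eval_Pairf)
next
  case (Prim f g)
  have "run (Prim f g) (pair x0 n) s = Suc v \<Longrightarrow> eval {} (Prim f g) (pair x0 n) v" for x0 n v
  proof (induction n arbitrary: v)
    case 0
    then show ?case using Prim.IH(1) by (auto intro: eval_Prim0)
  next
    case (Suc n)
    then obtain w where "run (Prim f g) (pair x0 n) s = Suc w" "run g (pair x0 (pair n w)) s = Suc v"
      by (auto split: nat.splits)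
    then show ?case using Suc.IH Prim.IH(2) by (blast intro: eval_PrimS)
  qed
  then show ?case using Prim.prems by (metis pair_pfst_psnd)
next
  case (Mu f)
  let ?h = "\<lambda>j. run f (pair x j) s"
  have "?h v = 1" "\<forall>j<v. ?h j \<ge> 2"
    using Mu.prems by (simp_all add: run_Mu_eq_Suc_iff search_eq_Suc_Suc_iff)
  have "\<exists>u>0. eval {} f (pair x j) u" if "j < v" for j
  proof -
    have "?h j = Suc (?h j - 1)" "?h j - 1 > 0"
      using \<open>\<forall>j<v. ?h j \<ge> 2\<close> that by auto
    then show ?thesis using Mu.IH by blast
  qed
  then show ?case
    using Mu.IH \<open>?h v = 1\<close> by (auto intro!: eval_Mu)
qed (use eval_Zero eval_Succ eval_Ident eval_Fst eval_Snd eval_Oracle[of "{}"] in auto)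

lemma run_mono: "run p x s = Suc v \<Longrightarrow> s \<le> s' \<Longrightarrow> run p x s' = Suc v"
proof (induction p arbitrary: x s v s')
  case (Comp f g)
  from Comp.prems(1) obtain w where w: "run g x s = Suc w" "run f w s = Suc v"
    by (auto split: nat.splits)
  show ?case
    using Comp.IH(1)[OF w(2) Comp.prems(2)] Comp.IH(2)[OF w(1) Comp.prems(2)] by simp
next
  case (Pairf f g)
  from Pairf.prems(1) obtain a b where ab: "run f x s = Suc a" "run g x s = Suc b" "v = pair a b"
    by (auto split: nat.splits)
  show ?case
    using Pairf.IH(1)[OF ab(1) Pairf.prems(2)] Pairf.IH(2)[OF ab(2) Pairf.prems(2)] ab(3) by simp
next
  case (Prim f g)
  have "run (Prim f g) (pair x0 n) s = Suc v \<Longrightarrow> run (Prim f g) (pair x0 n) s' = Suc v" for x0 n v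
  proof (induction n arbitrary: v)
    case 0
    then show ?case using Prim.IH(1)[OF _ Prim.prems(2)] by simp
  next
    case (Suc n)
    from Suc.prems obtain w where w: "run (Prim f g) (pair x0 n) s = Suc w" "run g (pair x0 (pair n w)) s = Suc v"
      by (auto split: nat.splits)
    show ?case using Suc.IH[OF w(1)] Prim.IH(2)[OF w(2) Prim.prems(2)] by simp
  qed
  then show ?case using Prim.prems(1) by (metis pair_pfst_psnd)
next
  case (Mu f)
  let ?h = "\<lambda>s j. run f (pair x j) s"
  have h: "v < s" "?h s v = 1" "\<forall>j<v. ?h s j \<ge> 2"
    using Mu.prems(1) by (simp_all add: run_Mu_eq_Suc_iff search_eq_Suc_Suc_iff)
  have "?h s' v = 1"
    using Mu.IH[OF _ Mu.prems(2)] h(2) by simp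
  moreover have "?h s' j \<ge> 2" if "j < v" for j
  proof -
    have "?h s j = Suc (?h s j - 1)" "?h s j \<ge> 2" using h(3) that by auto
    then show ?thesis using Mu.IH[OF _ Mu.prems(2)] by (metis)
  qed
  ultimately show ?case
    using h(1) Mu.prems(2) by (simp add: run_Mu_eq_Suc_iff search_eq_Suc_Suc_iff)
qed auto

lemma run_mono_ge:
  assumes "run p x s \<ge> 2" "s \<le> s'" shows "run p x s' \<ge> 2"
  using assms run_mono[of p x s "run p x s - 1" s'] by simp

lemma ex_common_bound:
  fixes P :: "nat \<Rightarrow> nat \<Rightarrow> bool"
  assumes "\<forall>j<k. \<exists>s. P j s" and "\<And>j s s'. P j s \<Longrightarrow> s \<le> s' \<Longrightarrow> P j s'"
  shows "\<exists>s. \<forall>j<k. P j s"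
  using assms(1)
proof (induction k)
  case (Suc k)
  then obtain s1 s2 where "\<forall>j<k. P j s1" "P k s2" by auto
  then have "\<forall>j<Suc k. P j (max s1 s2)"
    using assms(2) by (metis less_Suc_eq max.cobounded1 max.cobounded2)
  then show ?case by blast
qed simp

lemma run_complete: "eval {} p x v \<Longrightarrow> \<exists>s. run p x s = Suc v"
proof (induction rule: eval.induct)
  case (eval_Comp g x w f v)
  then obtain s1 s2 where "run g x s1 = Suc w" "run f w s2 = Suc v" by blast
  then have "run g x (max s1 s2) = Suc w" "run f w (max s1 s2) = Suc v"
    by (auto intro: run_mono)
  then show ?case by (intro exI[of _ "max s1 s2"]) simp
next
  case (eval_Pairf f x v g w)
  then obtain s1 s2 where "run f x s1 = Suc v" "run g x s2 = Suc w" by blast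
  then have "run f x (max s1 s2) = Suc v" "run g x (max s1 s2) = Suc w"
    by (auto intro: run_mono)
  then show ?case by (intro exI[of _ "max s1 s2"]) simp
next
  case (eval_PrimS f g x n w v)
  then obtain s1 s2 where "run (Prim f g) (pair x n) s1 = Suc w" "run g (pair x (pair n w)) s2 = Suc v"
    by blast
  then have "run (Prim f g) (pair x n) (max s1 s2) = Suc w" "run g (pair x (pair n w)) (max s1 s2) = Suc v"
    by (auto intro: run_mono)
  then show ?case by (intro exI[of _ "max s1 s2"]) simp
next
  case (eval_Mu f x n)
  let ?h = "\<lambda>s j. run f (pair x j) s"
  obtain s0 where s0: "?h s0 n = 1"
    using eval_Mu(2) by auto
  have "\<forall>j<n. \<exists>s. ?h s j \<ge> 2"
  proof (intro allI impI)
    fix j assume "j < n"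
    then obtain v s where "v > 0" "?h s j = Suc v" using eval_Mu(3) by blast
    then show "\<exists>s. ?h s j \<ge> 2" by (intro exI[of _ s]) simp
  qed
  then obtain s1 where s1: "\<forall>j<n. ?h s1 j \<ge> 2"
    using ex_common_bound[where P = "\<lambda>j s. ?h s j \<ge> 2"] run_mono_ge by meson
  define s where "s = max (Suc n) (max s0 s1)"
  have "?h s n = 1" using s0 run_mono[of f "pair x n" s0 0 s] by (simp add: s_def)
  moreover have "\<forall>j<n. ?h s j \<ge> 2" using s1 run_mono_ge[of f _ s1 s] by (simp add: s_def)
  ultimately have "search (?h s) s = Suc (Suc n)"
    by (simp add: search_eq_Suc_Suc_iff s_def)
  then show ?case by (auto simp: run_Mu_eq_Suc_iff)
qed auto

lemma halts_iff_run: "(\<exists>v. eval {} p x v) \<longleftrightarrow> (\<exists>s. run p x s \<noteq> 0)"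
proof
  assume "\<exists>v. eval {} p x v"
  then obtain v s where "run p x s = Suc v"
    using run_complete by blast
  then show "\<exists>s. run p x s \<noteq> 0"
    by (intro exI[of _ s]) simp
next
  assume "\<exists>s. run p x s \<noteq> 0"
  then obtain s v where "run p x s = Suc v"
    using not0_implies_Suc by blast
  then show "\<exists>v. eval {} p x v"
    using run_sound by blast
qed

text \<open>The clock is carried inside the parameter of the recursion, in the form computed by \<open>run_prog\<close>.\<close>

lemma run_Prim_folded:
  "run (Prim f g) x s = prim_rec (\<lambda>e. run f (pfst e) (psnd e))
     (\<lambda>e. case psnd (psnd e) of 0 \<Rightarrow> 0
        | Suc w \<Rightarrow> run g (pair (pfst (pfst e)) (pair (pfst (psnd e)) w)) (psnd (pfst e)))
     (pair (pfst x) s) (psnd x)"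
proof -
  have "run (Prim f g) (pair x0 n) s = prim_rec (\<lambda>e. run f (pfst e) (psnd e))
     (\<lambda>e. case psnd (psnd e) of 0 \<Rightarrow> 0
        | Suc w \<Rightarrow> run g (pair (pfst (pfst e)) (pair (pfst (psnd e)) w)) (psnd (pfst e)))
     (pair x0 s) n" for x0 n
    by (induction n) (simp_all split: nat.split)
  then show ?thesis by (metis pair_pfst_psnd)
qed

lemma search_run_folded:
  "search (\<lambda>j. run f (pair x j) s) k = prim_rec (\<lambda>_. 0)
     (\<lambda>e. case psnd (psnd e) of
           0 \<Rightarrow> (case run f (pair (pfst (pfst e)) (pfst (psnd e))) (psnd (pfst e)) of
                  0 \<Rightarrow> 1 | Suc 0 \<Rightarrow> Suc (Suc (pfst (psnd e))) | Suc (Suc _) \<Rightarrow> 0)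
         | Suc r \<Rightarrow> Suc r)
     (pair x s) k"
  by (induction k) (auto split: nat.split)

primrec run_prog :: "recf \<Rightarrow> recf" where
  "run_prog Zero = const_prog 1"
| "run_prog Succ = Comp Succ (Comp Succ Fst)"
| "run_prog Ident = Comp Succ Fst"
| "run_prog Fst = Comp Succ (Comp Fst Fst)"
| "run_prog Snd = Comp Succ (Comp Snd Fst)"
| "run_prog Oracle = const_prog 1"
| "run_prog (Comp f g) = ifz_prog (run_prog g) Zero (Comp (run_prog f) (Pairf Snd (Comp Snd Fst)))"
| "run_prog (Pairf f g) = ifz_prog (run_prog f) Zero
     (ifz_prog (Comp (run_prog g) Fst) Zero (Comp Succ (Pairf (Comp Snd Fst) Snd)))"
| "run_prog (Prim f g) = Comp (Prim (run_prog f)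
      (ifz_prog (Comp Snd Snd) Zero
        (Comp (run_prog g) (Pairf (Pairf (Comp Fst (Comp Fst Fst)) (Pairf (Comp Fst (Comp Snd Fst)) Snd))
                                 (Comp Snd (Comp Fst Fst))))))
    (Pairf (Pairf (Comp Fst Fst) Snd) (Comp Snd Fst))"
| "run_prog (Mu f) = ifz_prog
     (Comp (Prim Zero
        (ifz_prog (Comp Snd Snd)
           (ifz_prog (Comp (run_prog f) (Pairf (Pairf (Comp Fst Fst) (Comp Fst Snd)) (Comp Snd Fst)))
              (const_prog 1)
              (ifz_prog Snd (Comp Succ (Comp Succ (Comp Fst (Comp Snd Fst)))) Zero))
           (Comp Succ Snd)))
      (Pairf Ident Snd))
     Zero (ifz_prog Snd Zero (Comp Snd Fst))"

lemma computes_run_prog: "computes Z (run_prog p) (\<lambda>y. run p (pfst y) (psnd y))"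
proof (induction p)
  case (Comp f g)
  show ?case
    by simp (rule computes_cong, (rule computes_intros Comp.IH)+, simp split: nat.split)
next
  case (Pairf f g)
  show ?case
    by simp (rule computes_cong, (rule computes_intros Pairf.IH)+, simp split: nat.split)
next
  case (Prim f g)
  show ?case
    by simp (rule computes_cong, (rule computes_intros Prim.IH)+,
        simp add: run_Prim_folded cong: nat.case_cong)
next
  case (Mu f)
  show ?case
    by simp (rule computes_cong, (rule computes_intros Mu.IH)+,
        simp add: run.simps(10) search_run_folded pair_pfst_psnd split: nat.split cong: nat.case_cong)
qed (simp, rule computes_cong, (rule computes_intros)+, simp)+

section \<open>Deciding conflicts between finite conditions and the oracle\<close>

definition pred_prog :: recf where
  "pred_prog = Comp (Prim Zero (Comp Fst Snd)) (Pairf Zero Ident)"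

lemma computes_pred_prog: "computes Z pred_prog (\<lambda>y. y - 1)"
proof -
  have pred: "prim_rec (\<lambda>_. 0) (\<lambda>e. pfst (psnd e)) x n = n - 1" for x n
    by (cases n) simp_all
  show ?thesis
    unfolding pred_prog_def by (rule computes_cong, (rule computes_intros)+) (simp add: pred)
qed

definition monus_prog :: recf where
  "monus_prog = Prim Ident (Comp pred_prog (Comp Snd Snd))"

lemma computes_monus_prog: "computes Z monus_prog (\<lambda>y. pfst y - psnd y)"
proof -
  have monus: "prim_rec (\<lambda>y. y) (\<lambda>e. psnd (psnd e) - 1) a b = a - b" for a b
    by (induction b) auto
  show ?thesis
    unfolding monus_prog_def
    by (rule computes_cong, (rule computes_intros computes_pred_prog)+) (simp add: monus[simplified])
qed

definition neq_prog :: recf where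
  "neq_prog = ifz_prog monus_prog (ifz_prog (Comp monus_prog (Pairf Snd Fst)) Zero (const_prog 1)) (const_prog 1)"

lemma computes_neq_prog: "computes Z neq_prog (\<lambda>y. of_bool (pfst y \<noteq> psnd y))"
  unfolding neq_prog_def
  by (rule computes_cong, (rule computes_intros computes_monus_prog)+) (auto split: nat.split)

definition divmod2_prog :: recf where
  "divmod2_prog = Comp (Prim Zero
     (ifz_prog (Comp Snd (Comp Snd Snd)) (Pairf (Comp Fst (Comp Snd Snd)) (const_prog 1))
        (Pairf (Comp Succ (Comp Fst (Comp Snd (Comp Snd Fst)))) Zero))) (Pairf Zero Ident)"

lemma computes_divmod2_prog: "computes Z divmod2_prog (\<lambda>n. pair (n div 2) (n mod 2))"
proof -
  have divmod2: "prim_rec (\<lambda>_. 0) (\<lambda>e. case psnd (psnd (psnd e)) of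
          0 \<Rightarrow> pair (pfst (psnd (psnd e))) (Suc 0)
        | Suc _ \<Rightarrow> pair (Suc (pfst (psnd (psnd e)))) 0) x n = pair (n div 2) (n mod 2)" for x n
    by (induction n) (auto split: nat.split, presburger+)
  show ?thesis
    unfolding divmod2_prog_def by (rule computes_cong, (rule computes_intros)+) (simp add: divmod2 cong: nat.case_cong)
qed

definition shiftr_prog :: recf where
  "shiftr_prog = Prim Ident (Comp (Comp Fst divmod2_prog) (Comp Snd Snd))"

lemma computes_shiftr_prog: "computes Z shiftr_prog (\<lambda>y. pfst y div 2 ^ psnd y)"
proof -
  have shiftr: "prim_rec (\<lambda>y. y) (\<lambda>e. psnd (psnd e) div 2) c k = c div 2 ^ k" for c k
    by (induction k) (simp_all del: power_Suc add: power_Suc2 div_mult2_eq)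
  show ?thesis
    unfolding shiftr_prog_def
    by (rule computes_cong, (rule computes_intros computes_divmod2_prog)+) (simp add: shiftr)
qed

definition bit_prog :: recf where
  "bit_prog = Comp Snd (Comp divmod2_prog shiftr_prog)"

lemma computes_bit_prog: "computes Z bit_prog (\<lambda>y. pfst y div 2 ^ psnd y mod 2)"
  unfolding bit_prog_def
  by (rule computes_cong, (rule computes_intros computes_divmod2_prog computes_shiftr_prog)+) simp

definition conflicts :: "nat set \<Rightarrow> nat \<Rightarrow> bool" where
  "conflicts Z c \<longleftrightarrow> (\<exists>j\<in>set_decode c. psnd j \<noteq> of_bool (pfst j \<in> Z))"

lemma mem_set_decode_less: "j \<in> set_decode c \<Longrightarrow> j < c"
proof -
  assume "j \<in> set_decode c"
  then have "0 < c div 2 ^ j"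
    by (simp add: set_decode_def odd_pos)
  then have "2 ^ j \<le> c"
    by (simp add: div_greater_zero_iff)
  then show "j < c"
    using less_exp[of j] by linarith
qed

lemma conflicts_code_fin_iff:
  assumes "finite (dom \<sigma>)"
  shows "conflicts Z (code_fin \<sigma>) \<longleftrightarrow> \<not> agrees \<sigma> Z"
proof -
  let ?f = "\<lambda>x. pair x (of_bool (the (\<sigma> x)))"
  have "{pair x (if b then 1 else 0) | x b. \<sigma> x = Some b} = ?f ` dom \<sigma>" (is "?S = _")
  proof
    show "?S \<subseteq> ?f ` dom \<sigma>"
      by (auto intro!: image_eqI)
    show "?f ` dom \<sigma> \<subseteq> ?S"
    proof
      fix y assume "y \<in> ?f ` dom \<sigma>"
      then obtain x b where "y = ?f x" "\<sigma> x = Some b" by blast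
      then show "y \<in> ?S" by auto
    qed
  qed
  then have "set_decode (code_fin \<sigma>) = ?f ` dom \<sigma>"
    using assms by (simp add: code_fin_def)
  then have "conflicts Z (code_fin \<sigma>) \<longleftrightarrow> (\<exists>x\<in>dom \<sigma>. psnd (?f x) \<noteq> of_bool (pfst (?f x) \<in> Z))"
    unfolding conflicts_def by simp
  also have "\<dots> \<longleftrightarrow> (\<exists>x\<in>dom \<sigma>. \<sigma> x \<noteq> Some (x \<in> Z))"
    by (intro bex_cong refl) (auto simp: dom_def)
  also have "\<dots> \<longleftrightarrow> \<not> agrees \<sigma> Z"
    by (simp add: agrees_def)
  finally show ?thesis .
qed

definition mismatch_prog :: recf where
  "mismatch_prog = ifz_prog bit_prog Zero
     (Comp neq_prog (Pairf (Comp Snd (Comp Snd Fst)) (Comp Oracle (Comp Fst (Comp Snd Fst)))))"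

lemma computes_mismatch_prog:
  "computes Z mismatch_prog
     (\<lambda>y. of_bool (psnd y \<in> set_decode (pfst y) \<and> psnd (psnd y) \<noteq> of_bool (pfst (psnd y) \<in> Z)))"
  unfolding mismatch_prog_def
  by (rule computes_cong, (rule computes_intros computes_bit_prog computes_neq_prog)+)
    (auto simp: set_decode_def odd_iff_mod_2_eq_one split: nat.split)

lemma prim_rec_exists_below:
  "prim_rec (\<lambda>_. 0) (\<lambda>e. case psnd (psnd e) of 0 \<Rightarrow> of_bool (P (pfst e) (pfst (psnd e))) | Suc a \<Rightarrow> Suc a) c k
     = of_bool (\<exists>j<k. P c j)"
  by (induction k) (auto simp: less_Suc_eq)

definition conflicts_prog :: recf where
  "conflicts_prog = Comp (Prim Zero
     (ifz_prog (Comp Snd Snd) (Comp mismatch_prog (Pairf Fst (Comp Fst Snd))) (Comp Succ Snd)))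
     (Pairf Ident Ident)"

lemma computes_conflicts_prog: "computes Z conflicts_prog (\<lambda>c. of_bool (conflicts Z c))"
proof -
  have below: "(\<exists>j<c. j \<in> set_decode c \<and> P j) \<longleftrightarrow> (\<exists>j\<in>set_decode c. P j)" for c P
    using mem_set_decode_less by blast
  show ?thesis
    unfolding conflicts_prog_def conflicts_def
    by (rule computes_cong, (rule computes_intros computes_mismatch_prog)+)
      (simp add: below prim_rec_exists_below[where P = "\<lambda>c j. j \<in> set_decode c \<and> psnd j \<noteq> of_bool (pfst j \<in> Z)"]
        cong: nat.case_cong)
qed

section \<open>Searching for applicable axioms\<close>

text \<open>The witness is \<open>t = \<langle>a, s\<rangle>\<close>: the enumeration program \<open>P\<close> accepts the axiom code
  \<open>a = \<langle>l, \<langle>c, y\<rangle>\<rangle>\<close> within \<open>s\<close> steps, and the condition coded by \<open>c\<close> does not conflict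
  with the oracle.\<close>

definition axiom_found :: "nat set \<Rightarrow> recf \<Rightarrow> nat \<Rightarrow> nat \<Rightarrow> bool" where
  "axiom_found Z P y t \<longleftrightarrow> run P (pfst t) (psnd t) \<noteq> 0 \<and> psnd (psnd (pfst t)) = y
     \<and> \<not> conflicts Z (pfst (psnd (pfst t)))"

definition axiom_search_prog :: "recf \<Rightarrow> recf" where
  "axiom_search_prog P = ifz_prog (Comp (run_prog P) (Pairf (Comp Fst Snd) (Comp Snd Snd))) (const_prog 1)
     (Comp (ifz_prog (Comp neq_prog (Pairf (Comp Snd (Comp Snd (Comp Fst Snd))) Fst))
              (Comp conflicts_prog (Comp Fst (Comp Snd (Comp Fst Snd)))) (const_prog 1)) Fst)"

lemma computes_axiom_search_prog:
  "computes Z (axiom_search_prog P) (\<lambda>e. of_bool (\<not> axiom_found Z P (pfst e) (psnd e)))"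
  unfolding axiom_search_prog_def
  by (rule computes_cong, (rule computes_intros computes_run_prog computes_neq_prog computes_conflicts_prog)+)
    (auto simp: axiom_found_def split: nat.split)

lemma halts_Comp_iff:
  assumes "computes Z g G"
  shows "(\<exists>v. eval Z (Comp f g) x v) \<longleftrightarrow> (\<exists>v. eval Z f (G x) v)"
proof
  assume "\<exists>v. eval Z (Comp f g) x v"
  then obtain v w where "eval Z g x w" "eval Z f w v"
    by (blast elim: eval_CompE)
  then show "\<exists>v. eval Z f (G x) v"
    using assms unfolding computes_def by auto
next
  assume "\<exists>v. eval Z f (G x) v"
  moreover have "eval Z g x (G x)"
    using assms unfolding computes_def by simp
  ultimately show "\<exists>v. eval Z (Comp f g) x v"
    by (blast intro: eval_Comp)
qed

definition column_prog :: "recf \<Rightarrow> nat \<Rightarrow> recf" where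
  "column_prog P n = Comp (Mu (axiom_search_prog P)) (Pairf (const_prog n) Ident)"

lemma halts_column_prog_iff:
  "(\<exists>v. eval Z (column_prog P n) z v) \<longleftrightarrow> (\<exists>t. axiom_found Z P (pair n z) t)"
proof -
  have "computes Z (Pairf (const_prog n) Ident) (pair n)"
    by (rule computes_cong, (rule computes_intros)+) simp
  then show ?thesis
    unfolding column_prog_def
    by (simp add: halts_Comp_iff Mu_halts_iff[OF computes_axiom_search_prog])
qed

definition const_code_prog :: recf where
  "const_code_prog = Comp (Prim Zero (Pairf (const_prog 6) (Pairf (const_prog (code Succ)) (Comp Snd Snd))))
     (Pairf Zero Ident)"

lemma computes_const_code_prog: "computes Z const_code_prog (\<lambda>n. code (const_prog n))"
proof -
  have codes: "prim_rec (\<lambda>_. 0) (\<lambda>e. pair 6 (pair (code Succ) (psnd (psnd e)))) x n = code (const_prog n)"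
    for x n
    by (induction n) simp_all
  show ?thesis
    unfolding const_code_prog_def
    by (rule computes_cong, (rule computes_intros)+) (simp add: codes[simplified])
qed

lemma computable_code_column_prog: "computable (\<lambda>n. code (column_prog P n))"
proof -
  have "computes {} (Pairf (const_prog 6) (Pairf (const_prog (code (Mu (axiom_search_prog P))))
      (Pairf (const_prog 7) (Pairf const_code_prog (const_prog (code Ident))))))
     (\<lambda>n. code (column_prog P n))"
    by (rule computes_cong, (rule computes_intros computes_const_code_prog)+) (simp add: column_prog_def)
  then show ?thesis
    unfolding computable_def computes_def by blast
qed

lemma code_inj: "code p = code q \<Longrightarrow> p = q"
  by (induction p arbitrary: q) (case_tac q; simp)+

lemma mem_W_code_iff: "z \<in> W (code p) Z \<longleftrightarrow> (\<exists>v. eval Z p z v)"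
  unfolding W_def using code_inj by blast

lemma ce_imp_halting_set:
  assumes "ce X"
  shows "\<exists>P. X = {y. \<exists>v. eval {} P y v}"
proof -
  obtain e where e: "X = W e {}"
    using assms unfolding ce_def by blast
  show ?thesis
  proof (cases "\<exists>p. code p = e")
    case True
    then show ?thesis
      using e mem_W_code_iff by blast
  next
    case False
    then have "X = {}"
      unfolding e W_def by blast
    moreover have "\<not> eval {} (Mu (const_prog 1)) y v" for y v
      \<comment> \<open>non-codes index the empty set, which is also the domain of this program\<close>
      using Mu_halts_iff[OF computes_const_prog[of "{}" 1], of y] by auto
    ultimately show ?thesis
      by blast
  qed
qed

section \<open>Sets generated by axioms\<close>

lemma is_axiomD:
  assumes "is_axiom (l, \<sigma>, y)"
  shows "finite (dom \<sigma>)" and "\<forall>x\<in>dom \<sigma>. pfst x < pfst y"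
proof -
  obtain m z where "l \<le> m" "y = pair m z"
    using assms unfolding is_axiom_def by auto
  moreover have "\<forall>x\<in>dom \<sigma>. pfst x < l"
  proof
    fix x assume "x \<in> dom \<sigma>"
    then obtain m z where "m < l" "x = pair m z"
      using assms unfolding is_axiom_def by blast
    then show "pfst x < l" by simp
  qed
  ultimately show "\<forall>x\<in>dom \<sigma>. pfst x < pfst y"
    using less_le_trans by auto
  show "finite (dom \<sigma>)"
    using assms unfolding is_axiom_def by simp
qed

lemma axiom_agrees_cong:
  assumes "\<forall>a\<in>A. is_axiom a" and "(l, \<sigma>, y) \<in> A"
    and "\<forall>x. pfst x < pfst y \<longrightarrow> (x \<in> C1 \<longleftrightarrow> x \<in> C2)"
  shows "agrees \<sigma> C1 \<longleftrightarrow> agrees \<sigma> C2"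
  using assms is_axiomD(2)[of l \<sigma> y] unfolding agrees_def by auto

lemma generated_by_unique:
  assumes ax: "\<forall>a\<in>A. is_axiom a" and C1: "generated_by A C1" and C2: "generated_by A C2"
  shows "C1 = C2"
proof -
  have "\<forall>x. pfst x < m \<longrightarrow> (x \<in> C1 \<longleftrightarrow> x \<in> C2)" for m
  proof (induction m)
    case (Suc m)
    show ?case
    proof (intro allI impI)
      fix y assume "pfst y < Suc m"
      then have below: "\<forall>x. pfst x < pfst y \<longrightarrow> (x \<in> C1 \<longleftrightarrow> x \<in> C2)"
        using Suc.IH by auto
      have "y \<in> C1 \<longleftrightarrow> (\<exists>l \<sigma>. (l, \<sigma>, y) \<in> A \<and> agrees \<sigma> C1)"
        using C1 unfolding generated_by_def by blast
      also have "\<dots> \<longleftrightarrow> (\<exists>l \<sigma>. (l, \<sigma>, y) \<in> A \<and> agrees \<sigma> C2)"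
        using axiom_agrees_cong[OF ax _ below] by blast
      also have "\<dots> \<longleftrightarrow> y \<in> C2"
        using C2 unfolding generated_by_def by blast
      finally show "y \<in> C1 \<longleftrightarrow> y \<in> C2" .
    qed
  qed simp
  then show ?thesis
    by (metis lessI set_eqI)
qed

text \<open>\<open>stage A n\<close> is the generated set restricted to the columns below \<open>n\<close>.\<close>

primrec stage :: "(nat \<times> (nat \<rightharpoonup> bool) \<times> nat) set \<Rightarrow> nat \<Rightarrow> nat set" where
  "stage A 0 = {}"
| "stage A (Suc n) = stage A n \<union> {y. pfst y = n \<and> (\<exists>l \<sigma>. (l, \<sigma>, y) \<in> A \<and> agrees \<sigma> (stage A n))}"

lemma stage_below: "y \<in> stage A n \<Longrightarrow> pfst y < n"
  by (induction n) auto

lemma mem_stage_iff: "pfst y < n \<Longrightarrow> y \<in> stage A n \<longleftrightarrow> y \<in> stage A (Suc (pfst y))"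
  by (induction n) (auto simp: less_Suc_eq)

lemma generated_by_stages:
  assumes ax: "\<forall>a\<in>A. is_axiom a"
  shows "generated_by A {y. y \<in> stage A (Suc (pfst y))}" (is "generated_by A ?C")
  unfolding generated_by_def
proof
  fix y
  have below: "\<forall>x. pfst x < pfst y \<longrightarrow> (x \<in> stage A (pfst y) \<longleftrightarrow> x \<in> ?C)"
    using mem_stage_iff[of _ "pfst y" A] by simp
  have "y \<notin> stage A (pfst y)"
    using stage_below by blast
  then have "y \<in> ?C \<longleftrightarrow> (\<exists>l \<sigma>. (l, \<sigma>, y) \<in> A \<and> agrees \<sigma> (stage A (pfst y)))"
    by simp
  also have "\<dots> \<longleftrightarrow> (\<exists>l \<sigma>. (l, \<sigma>, y) \<in> A \<and> agrees \<sigma> ?C)"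
    using axiom_agrees_cong[OF ax _ below] by blast
  finally show "y \<in> ?C \<longleftrightarrow> (\<exists>l \<sigma>. (l, \<sigma>, y) \<in> A \<and> agrees \<sigma> ?C)" .
qed

lemma below_cols_iff: "x \<in> below_cols C n \<longleftrightarrow> x \<in> C \<and> pfst x < n"
  unfolding below_cols_def by (auto intro: pair_pfst_psnd[symmetric])

lemma ex_axiom_found_iff:
  assumes P: "code_axiom ` A = {a. \<exists>v. eval {} P a v}"
  shows "(\<exists>t. axiom_found Z P y t) \<longleftrightarrow> (\<exists>l \<sigma>. (l, \<sigma>, y) \<in> A \<and> \<not> conflicts Z (code_fin \<sigma>))"
proof -
  have "(\<exists>t. axiom_found Z P y t) \<longleftrightarrow>
      (\<exists>a s. run P a s \<noteq> 0 \<and> psnd (psnd a) = y \<and> \<not> conflicts Z (pfst (psnd a)))"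
    unfolding axiom_found_def by (metis pfst_pair psnd_pair)
  also have "\<dots> \<longleftrightarrow> (\<exists>a\<in>code_axiom ` A. psnd (psnd a) = y \<and> \<not> conflicts Z (pfst (psnd a)))"
    unfolding P using halts_iff_run by blast
  also have "\<dots> \<longleftrightarrow> (\<exists>l \<sigma>. (l, \<sigma>, y) \<in> A \<and> \<not> conflicts Z (code_fin \<sigma>))"
    by (force simp: code_axiom_def)
  finally show ?thesis .
qed

lemma column_eq_W:
  assumes ax: "\<forall>a\<in>A. is_axiom a" and P: "code_axiom ` A = {a. \<exists>v. eval {} P a v}"
    and C: "generated_by A C"
  shows "column C n = W (code (column_prog P n)) (below_cols C n)"
proof (rule set_eqI)
  fix z
  have "z \<in> W (code (column_prog P n)) (below_cols C n) \<longleftrightarrow>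
      (\<exists>l \<sigma>. (l, \<sigma>, pair n z) \<in> A \<and> \<not> conflicts (below_cols C n) (code_fin \<sigma>))"
    by (simp add: mem_W_code_iff halts_column_prog_iff ex_axiom_found_iff[OF P])
  also have "\<dots> \<longleftrightarrow> (\<exists>l \<sigma>. (l, \<sigma>, pair n z) \<in> A \<and> agrees \<sigma> C)"
  proof -
    have "agrees \<sigma> (below_cols C n) \<longleftrightarrow> agrees \<sigma> C" if "(l, \<sigma>, pair n z) \<in> A" for l \<sigma>
      using axiom_agrees_cong[OF ax that] by (simp add: below_cols_iff)
    then show ?thesis
      using ax conflicts_code_fin_iff is_axiomD(1) by blast
  qed
  also have "\<dots> \<longleftrightarrow> z \<in> column C n"
    using C unfolding generated_by_def column_def by blast
  finally show "z \<in> column C n \<longleftrightarrow> z \<in> W (code (column_prog P n)) (below_cols C n)"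
    by blast
qed

theorem lemma2p2:
  fixes A :: "(nat \<times> (nat \<rightharpoonup> bool) \<times> nat) set"
  assumes "\<forall>a\<in>A. is_axiom a"
    and "ce (code_axiom ` A)"
  shows "(\<exists>!C. generated_by A C) \<and> (\<forall>C. generated_by A C \<longrightarrow> REA_omega C)"
proof
  show "\<exists>!C. generated_by A C"
    using generated_by_stages[OF assms(1)] generated_by_unique[OF assms(1)] by blast
  obtain P where "code_axiom ` A = {a. \<exists>v. eval {} P a v}"
    using ce_imp_halting_set[OF assms(2)] by blast
  then show "\<forall>C. generated_by A C \<longrightarrow> REA_omega C"
    using column_eq_W[OF assms(1)] computable_code_column_prog unfolding REA_omega_def by blast
qed

end
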